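(* Let $Y$, $\nu$, $\nu'$, $d(\cdot,x,n)$ be as in the context, and put $b_k=\log A_k$. Then: 1) For $\nu'$-almost every $x\in Y$, $$\liminf_{n\to\infty}d(\nu,x,n)=\liminf_{n\to\infty}\frac{\sum_{k=1}^n x_k}{\sum_{k=1}^n b_k},\qquad \limsup_{n\to\infty}d(\nu,x,n)=\limsup_{n\to\infty}\frac{\sum_{k=1}^n x_k}{\sum_{k=1}^n b_k},$$ where $x_k=-p_k'\log p_k-(1-p_k')\log(1-p_k)$. 2) For $\nu'$-almost every $x\in\operatorname{supp}(\nu')\subset Y$, $$\liminf_{n\to\infty}d(\nu',x,n)=\liminf_{n\to\infty}\frac{\sum_{k=1}^n y_k}{\sum_{k=1}^n b_k},\qquad \limsup_{n\to\infty}d(\nu',x,n)=\limsup_{n\to\infty}\frac{\sum_{k=1}^n y_k}{\sum_{k=1}^n b_k},$$ where $y_k=-p_k'\log p_k'-(1-p_k')\log(1-p_k')$ (with $0\log0=0$).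
   Context: Let $\mathcal A=\{0,1\}$. Let $(A_n)_{n\ge1}$ be real numbers with $A_n\ge2$. Define closed intervals $I_w$, $w\in\mathcal A^n$: $I_\emptyset=[0,1]$, and for $w\in\mathcal A^{n-1}$ with $I_w=[x_w,x_w+\ell]$, $I_{w0}=[x_w,x_w+\ell/A_n]$, $I_{w1}=[x_w+\ell-\ell/A_n,x_w+\ell]$. Let $Y=\bigcap_n\bigcup_{w\in\mathcal A^n}I_w$. Fix $0<a\le b<1$ and $(p_n)_{n\ge1}$ with $a\le p_n\le b$; let $\nu$ be the Borel probability measure with $\nu(I_\emptyset)=1$, $\nu(I_{w0})=p_n\nu(I_w)$, $\nu(I_{w1})=(1-p_n)\nu(I_w)$ for $w\in\mathcal A^{n-1}$ (so $\operatorname{supp}\nu=Y$). Given another sequence $(p_n')_{n\ge1}$ with $0\le p_n'\le1$, let $\nu'$ be the measure constructed in the same way with $p_n'$ in place of $p_n$. For $x\in Y$ and $n\ge1$, $I_n(x)$ denotes a level-$n$ interval $I_w$, $w\in\mathcal A^n$, containing $x$ (chosen consistently along the coding of $x$), and for a measure $\eta$, $d(\eta,x,n)=\frac{\log\eta(I_n(x))}{\log|I_n(x)|}$. *)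

theory Defs
  imports "HOL-Probability.Probability"
begin

text \<open>Points of Y are represented by their codings \<omega> :: nat \<Rightarrow> bool, where
  \<omega> k (k \<ge> 1) is the k-th digit: False = digit 0, True = digit 1.  Coordinate 0 is unused.\<close>

fun Ilen :: "(nat \<Rightarrow> real) \<Rightarrow> nat \<Rightarrow> real" where
  "Ilen A 0 = 1"
| "Ilen A (Suc n) = Ilen A n / A (Suc n)"

fun Ileft :: "(nat \<Rightarrow> real) \<Rightarrow> (nat \<Rightarrow> bool) \<Rightarrow> nat \<Rightarrow> real" where
  "Ileft A \<omega> 0 = 0"
| "Ileft A \<omega> (Suc n) =
     (if \<omega> (Suc n) then Ileft A \<omega> n + Ilen A n - Ilen A (Suc n) else Ileft A \<omega> n)"

definition Iint :: "(nat \<Rightarrow> real) \<Rightarrow> (nat \<Rightarrow> bool) \<Rightarrow> nat \<Rightarrow> real set" where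
  "Iint A \<omega> n = {Ileft A \<omega> n .. Ileft A \<omega> n + Ilen A n}"

text \<open>The Bernoulli-type measure with weights q: digit 0 at level k has probability q k,
  represented on coding space as a product measure.\<close>
definition coding_meas :: "(nat \<Rightarrow> real) \<Rightarrow> (nat \<Rightarrow> bool) measure" where
  "coding_meas q = (\<Pi>\<^sub>M k\<in>UNIV. measure_pmf (bernoulli_pmf (1 - q k)))"

text \<open>The set of codings whose first n digits agree with \<omega> (i.e. whose level-n interval is I_n(\<omega>)).\<close>
definition cyl :: "(nat \<Rightarrow> bool) measure \<Rightarrow> (nat \<Rightarrow> bool) \<Rightarrow> nat \<Rightarrow> (nat \<Rightarrow> bool) set" where
  "cyl M \<omega> n = {\<omega>' \<in> space M. \<forall>k\<in>{1..n}. \<omega>' k = \<omega> k}"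

definition dloc :: "(nat \<Rightarrow> bool) measure \<Rightarrow> (nat \<Rightarrow> real) \<Rightarrow> (nat \<Rightarrow> bool) \<Rightarrow> nat \<Rightarrow> real" where
  "dloc M A \<omega> n = ln (measure M (cyl M \<omega> n)) / ln (measure lborel (Iint A \<omega> n))"

end

theory Submission
  imports Defs "HOL-Library.Discrete_Functions" "HOL-Real_Asymp.Real_Asymp"
begin

(* Under \<nu>' the digits of x are independent, so -log \<nu>(I_n(x)) = \<Sum>k\<le>n g_k(x_k), where g_k(i)
   is minus the log of the \<nu>-probability of digit i at level k, is a sum of independent random
   variables with means x_k (for \<nu>' itself: y_k) and uniformly bounded second moments.  A strong
   law of large numbers (Chebyshev and Borel-Cantelli along n = j^2, monotonicity in between) makes
   it differ from \<Sum>k\<le>n x_k by o(n) almost surely.  Since -log |I_n(x)| = \<Sum>k\<le>n b_k \<ge> n log 2,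
   the ratio d(\<nu>, x, n) then differs from \<Sum>x_k / \<Sum>b_k by o(1), which changes neither liminf
   nor limsup. *)

lemma mono_sandwich_between_squares:
  fixes G U :: "nat \<Rightarrow> real"
  assumes "mono G" "mono U" and U_incr: "\<And>n. U (Suc n) - U n \<le> C"
    and "j^2 \<le> n" "n \<le> (Suc j)^2"
  shows "\<bar>G n - U n\<bar> \<le> \<bar>G (j^2) - U (j^2)\<bar> + \<bar>G ((Suc j)^2) - U ((Suc j)^2)\<bar> + C * (2 * real j + 1)"
proof -
  have "U ((Suc j)^2) - U (j^2) = (\<Sum>i = j^2..<(Suc j)^2. U (Suc i) - U i)"
    by (simp add: sum_Suc_diff' power_mono)
  also have "\<dots> \<le> (\<Sum>i = j^2..<(Suc j)^2. C)" by (intro sum_mono U_incr)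
  also have "\<dots> = C * (2 * real j + 1)" by (simp add: power2_eq_square algebra_simps)
  finally have "U ((Suc j)^2) - U (j^2) \<le> C * (2 * real j + 1)" .
  moreover have "G (j^2) \<le> G n" "G n \<le> G ((Suc j)^2)" "U (j^2) \<le> U n" "U n \<le> U ((Suc j)^2)"
    using assms by (auto dest: monoD)
  ultimately show ?thesis by linarith
qed

lemma filterlim_floor_sqrt_at_top: "filterlim floor_sqrt at_top at_top"
  unfolding filterlim_at_top eventually_sequentially
  by (metis le_floor_sqrtI)

lemma LIMSEQ_diff_div_of_squares:
  fixes G U :: "nat \<Rightarrow> real"
  assumes "mono G" "mono U" "\<And>n. U (Suc n) - U n \<le> C"
    and squares: "(\<lambda>j. (G (j^2) - U (j^2)) / real (j^2)) \<longlonglongrightarrow> 0"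
  shows "(\<lambda>n. (G n - U n) / real n) \<longlonglongrightarrow> 0"
proof -
  define E where "E j = \<bar>G (j^2) - U (j^2)\<bar> / real (j^2)" for j
  define h where "h j = E j + 4 * E (Suc j) + C * ((2 * real j + 1) / real (j^2))" for j
  have E: "E \<longlonglongrightarrow> 0" unfolding E_def using tendsto_rabs_zero[OF squares] by simp
  have "(\<lambda>j::nat. (2 * real j + 1) / real (j^2)) \<longlonglongrightarrow> 0" by real_asymp
  then have "h \<longlonglongrightarrow> 0 + 4 * 0 + C * 0"
    unfolding h_def by (intro tendsto_intros E LIMSEQ_Suc[OF E])
  then have "h \<longlonglongrightarrow> 0" by simp
  then have h_floor_sqrt: "(\<lambda>n. h (floor_sqrt n)) \<longlonglongrightarrow> 0"
    using filterlim_compose filterlim_floor_sqrt_at_top by blast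
  have bound: "norm ((G n - U n) / real n) \<le> h (floor_sqrt n)" if "n \<ge> 1" for n
  proof -
    define j where "j = floor_sqrt n"
    have j: "j \<ge> 1" "j^2 \<le> n" "n \<le> (Suc j)^2"
      using that Suc_floor_sqrt_power2_gt[of n] by (auto simp: j_def le_floor_sqrtI)
    have "(Suc j)^2 \<le> (2 * j)^2" using j(1) by (intro power_mono) auto
    then have next_le: "real ((Suc j)^2) \<le> 4 * real (j^2)"
      unfolding of_nat_le_iff[symmetric, where 'a = real] by (simp add: power_mult_distrib)
    have "norm ((G n - U n) / real n) \<le> \<bar>G n - U n\<bar> / real (j^2)"
      using j by (simp add: frac_le)
    also have "\<dots> \<le> (\<bar>G (j^2) - U (j^2)\<bar> + \<bar>G ((Suc j)^2) - U ((Suc j)^2)\<bar> + C * (2 * real j + 1)) / real (j^2)"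
      using mono_sandwich_between_squares[OF assms(1-3) j(2,3)] by (simp add: divide_right_mono)
    also have "\<dots> \<le> h j"
    proof -
      have next_square: "\<bar>G ((Suc j)^2) - U ((Suc j)^2)\<bar> / real (j^2) \<le> 4 * E (Suc j)"
        using mult_right_mono[OF next_le abs_ge_zero[of "G ((Suc j)^2) - U ((Suc j)^2)"]] j(1)
        unfolding E_def
        by (simp add: field_simps del: of_nat_Suc)
      have split: "(x + y + C * z) / w = x / w + y / w + C * (z / w)" for x y z w :: real
        by (simp only: add_divide_distrib times_divide_eq_right)
      show ?thesis
        unfolding h_def split E_def[of j] by (intro add_right_mono add_left_mono next_square)
    qed
    finally show ?thesis unfolding j_def .
  qed
  have "eventually (\<lambda>n. norm ((G n - U n) / real n) \<le> h (floor_sqrt n)) sequentially"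
    unfolding eventually_sequentially using bound by blast
  then show ?thesis using h_floor_sqrt by (rule Lim_null_comparison)
qed

lemma (in prob_space) expectation_square_sum_centered_indep:
  fixes X :: "'i \<Rightarrow> 'a \<Rightarrow> real"
  assumes "finite I" and indep: "indep_vars (\<lambda>_. borel) X I"
    and sq_int: "\<And>i. i \<in> I \<Longrightarrow> integrable M (\<lambda>\<omega>. X i \<omega> ^ 2)"
  defines "S \<equiv> \<lambda>\<omega>. \<Sum>i\<in>I. X i \<omega> - expectation (X i)"
  shows "integrable M (\<lambda>\<omega>. S \<omega> ^ 2)"
    and "expectation (\<lambda>\<omega>. S \<omega> ^ 2) = (\<Sum>i\<in>I. variance (X i))"
proof -
  define Y where "Y i = (\<lambda>\<omega>. X i \<omega> - expectation (X i))" for i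
  have meas: "X i \<in> borel_measurable M" if "i \<in> I" for i
    using indep that by (auto simp: indep_vars_def)
  have int_X: "integrable M (X i)" if "i \<in> I" for i
    using square_integrable_imp_integrable[OF meas sq_int] that by blast
  have int_Y: "integrable M (Y i)" if "i \<in> I" for i
    using int_X[OF that] by (simp add: Y_def)
  have E_Y: "expectation (Y i) = 0" if "i \<in> I" for i
    using int_X[OF that] by (simp add: Y_def prob_space)
  have indep_Y: "indep_vars (\<lambda>_. borel) Y I"
    unfolding Y_def by (rule indep_vars_compose2[OF indep]) simp
  have product: "integrable M (\<lambda>\<omega>. Y i \<omega> * Y j \<omega>) \<and>
      expectation (\<lambda>\<omega>. Y i \<omega> * Y j \<omega>) = (if i = j then variance (X i) else 0)"
    if "i \<in> I" "j \<in> I" for i j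
  proof (cases "i = j")
    case True
    have "integrable M (\<lambda>\<omega>. (X i \<omega> - expectation (X i))\<^sup>2)"
      using int_X[OF that(1)] sq_int[OF that(1)] unfolding power2_eq_square ring_distribs
      by (intro Bochner_Integration.integrable_diff) auto
    then show ?thesis using True by (simp add: Y_def power2_eq_square)
  next
    case False
    have pair: "indep_vars (\<lambda>_. borel) Y {i, j}"
      using indep_vars_subset[OF indep_Y] that by simp
    have "(\<lambda>\<omega>. \<Prod>k\<in>{i, j}. Y k \<omega>) = (\<lambda>\<omega>. Y i \<omega> * Y j \<omega>)" using False by simp
    then show ?thesis
      using indep_vars_lebesgue_integral[OF _ pair] indep_vars_integrable[OF _ pair]
        int_Y E_Y that False by auto
  qed
  have square: "S \<omega> ^ 2 = (\<Sum>i\<in>I. \<Sum>j\<in>I. Y i \<omega> * Y j \<omega>)" for \<omega>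
    unfolding S_def Y_def power2_eq_square by (simp add: sum_product)
  show "integrable M (\<lambda>\<omega>. S \<omega> ^ 2)"
    unfolding square using product by (intro Bochner_Integration.integrable_sum) auto
  have "expectation (\<lambda>\<omega>. S \<omega> ^ 2) = (\<Sum>i\<in>I. \<Sum>j\<in>I. if i = j then variance (X i) else 0)"
    unfolding square using product by (simp add: Bochner_Integration.integral_sum)
  also have "\<dots> = (\<Sum>i\<in>I. variance (X i))" using \<open>finite I\<close> by simp
  finally show "expectation (\<lambda>\<omega>. S \<omega> ^ 2) = (\<Sum>i\<in>I. variance (X i))" .
qed

lemma (in prob_space) AE_LIMSEQ_zero_along_squares:
  fixes S :: "nat \<Rightarrow> 'a \<Rightarrow> real"
  assumes meas[measurable]: "\<And>n. S n \<in> borel_measurable M"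
    and sq_int: "\<And>n. integrable M (\<lambda>\<omega>. S n \<omega> ^ 2)"
    and second_moment: "\<And>n. expectation (\<lambda>\<omega>. S n \<omega> ^ 2) \<le> C * real n"
  shows "AE \<omega> in M. (\<lambda>j. S (j^2) \<omega> / real (j^2)) \<longlonglongrightarrow> 0"
proof -
  have rare: "AE \<omega> in M. eventually (\<lambda>j. \<bar>S (j^2) \<omega>\<bar> < \<epsilon> * real (j^2)) sequentially"
    if "\<epsilon> > 0" for \<epsilon>
  proof -
    define B where "B j = {\<omega> \<in> space M. \<epsilon> * real (j^2) \<le> \<bar>S (j^2) \<omega>\<bar>}" for j
    have [measurable]: "B j \<in> sets M" for j unfolding B_def by measurable
    have bound: "prob (B j) \<le> C / \<epsilon>^2 * inverse (real j ^ 2)" if "j \<ge> 1" for j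
    proof -
      have "prob (B j) \<le> expectation (\<lambda>\<omega>. S (j^2) \<omega> ^ 2) / (\<epsilon> * real (j^2))^2"
        unfolding B_def using \<open>\<epsilon> > 0\<close> that by (intro second_moment_method sq_int) auto
      also have "\<dots> \<le> C * real (j^2) / (\<epsilon> * real (j^2))^2"
        by (intro divide_right_mono second_moment) auto
      also have "\<dots> = C / \<epsilon>^2 * inverse (real j ^ 2)"
        using \<open>\<epsilon> > 0\<close> that by (simp add: field_simps power2_eq_square)
      finally show ?thesis .
    qed
    have "summable (\<lambda>j. prob (B j))"
    proof (rule summable_comparison_test'[where N=1])
      show "summable (\<lambda>j. C / \<epsilon>^2 * inverse (real j ^ 2))"
        by (intro summable_mult inverse_power_summable) auto
      show "norm (prob (B j)) \<le> C / \<epsilon>^2 * inverse (real j ^ 2)" if "j \<ge> 1" for j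
        using bound[OF that] by simp
    qed
    then have "AE \<omega> in M. eventually (\<lambda>j. \<omega> \<in> space M - B j) sequentially"
      by (intro borel_cantelli_AE1) (auto simp: emeasure_eq_measure)
    then show ?thesis
      by (rule eventually_mono) (auto simp: B_def elim!: eventually_mono)
  qed
  have "AE \<omega> in M. \<forall>i::nat.
      eventually (\<lambda>j. \<bar>S (j^2) \<omega>\<bar> < inverse (real (Suc i)) * real (j^2)) sequentially"
    unfolding AE_all_countable by (intro allI rare) simp
  then show ?thesis
  proof (rule eventually_mono)
    fix \<omega> assume small: "\<forall>i::nat.
      eventually (\<lambda>j. \<bar>S (j^2) \<omega>\<bar> < inverse (real (Suc i)) * real (j^2)) sequentially"
    show "(\<lambda>j. S (j^2) \<omega> / real (j^2)) \<longlonglongrightarrow> 0"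
      unfolding tendsto_iff dist_real_def
    proof (intro allI impI)
      fix e :: real assume "e > 0"
      then obtain i where i: "inverse (real (Suc i)) < e" using reals_Archimedean by blast
      show "eventually (\<lambda>j. \<bar>S (j^2) \<omega> / real (j^2) - 0\<bar> < e) sequentially"
        using small[rule_format, of i] eventually_ge_at_top[of 1]
      proof eventually_elim
        case (elim j)
        then have "\<bar>S (j^2) \<omega>\<bar> / real (j^2) < inverse (real (Suc i))"
          by (simp add: divide_less_eq)
        then show ?case using i by simp
      qed
    qed
  qed
qed

lemma le_one_plus_square: "(x::real) \<le> 1 + x^2"
  using zero_le_power2[of "x - 1/2"] unfolding power2_eq_square by (simp add: algebra_simps)

lemma (in prob_space) strong_law_nonneg_bounded_second_moment:
  fixes X :: "nat \<Rightarrow> 'a \<Rightarrow> real"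
  assumes indep: "indep_vars (\<lambda>_. borel) X UNIV"
    and nonneg: "\<And>k \<omega>. k \<ge> 1 \<Longrightarrow> \<omega> \<in> space M \<Longrightarrow> 0 \<le> X k \<omega>"
    and sq_int: "\<And>k. integrable M (\<lambda>\<omega>. X k \<omega> ^ 2)"
    and second_moment: "\<And>k. k \<ge> 1 \<Longrightarrow> expectation (\<lambda>\<omega>. X k \<omega> ^ 2) \<le> C"
  shows "AE \<omega> in M. (\<lambda>n. (\<Sum>k=1..n. X k \<omega> - expectation (X k)) / real n) \<longlonglongrightarrow> 0"
proof -
  define S where "S n \<omega> = (\<Sum>k=1..n. X k \<omega> - expectation (X k))" for n \<omega>
  have meas[measurable]: "X k \<in> borel_measurable M" for k
    using indep by (auto simp: indep_vars_def)
  have int_X: "integrable M (X k)" for k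
    using square_integrable_imp_integrable[OF meas sq_int] .
  have "variance (X k) \<le> C" if "k \<ge> 1" for k
    using variance_eq[OF int_X[of k] sq_int[of k]] second_moment[OF that] zero_le_power2[of "expectation (X k)"]
    by linarith
  then have S_sq: "integrable M (\<lambda>\<omega>. S n \<omega> ^ 2)" "expectation (\<lambda>\<omega>. S n \<omega> ^ 2) \<le> C * real n" for n
    using expectation_square_sum_centered_indep[OF _ indep_vars_subset[OF indep], of "{1..n}"] sq_int
      sum_mono[of "{1..n}" "\<lambda>k. variance (X k)" "\<lambda>_. C"]
    unfolding S_def by (auto simp: mult.commute)
  have "AE \<omega> in M. (\<lambda>j. S (j^2) \<omega> / real (j^2)) \<longlonglongrightarrow> 0"
    by (rule AE_LIMSEQ_zero_along_squares[OF _ S_sq]) (simp add: S_def)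
  then show ?thesis
    using AE_space
  proof eventually_elim
    case (elim \<omega>)
    define G where "G n = (\<Sum>k=1..n. X k \<omega>)" for n
    define U where "U n = (\<Sum>k=1..n. expectation (X k))" for n
    have S_eq: "S n \<omega> = G n - U n" for n
      by (simp add: S_def G_def U_def sum_subtractf)
    have "mono G"
      unfolding mono_iff_le_Suc G_def using nonneg elim(2) by simp
    moreover have "mono U"
      unfolding mono_iff_le_Suc U_def using nonneg by (simp add: integral_nonneg_AE)
    moreover have "U (Suc n) - U n \<le> 1 + C" for n
    proof -
      have "expectation (X (Suc n)) \<le> expectation (\<lambda>\<omega>. 1 + X (Suc n) \<omega> ^ 2)"
        using int_X sq_int le_one_plus_square by (intro integral_mono) auto
      also have "\<dots> \<le> 1 + C"
        using sq_int second_moment[of "Suc n"] by (simp add: prob_space)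
      finally show ?thesis by (simp add: U_def)
    qed
    ultimately have "(\<lambda>n. (G n - U n) / real n) \<longlonglongrightarrow> 0"
      using LIMSEQ_diff_div_of_squares elim(1) unfolding S_eq by blast
    then show ?case unfolding S_def[symmetric] S_eq .
  qed
qed

abbreviation PiM_pmf :: "('i \<Rightarrow> 'a pmf) \<Rightarrow> ('i \<Rightarrow> 'a) measure" where
  "PiM_pmf Q \<equiv> PiM UNIV (\<lambda>i. measure_pmf (Q i))"

lemma prob_space_PiM_pmf: "prob_space (PiM_pmf Q)"
  by (intro prob_space_PiM measure_pmf.prob_space_axioms)

lemma distr_PiM_pmf_component: "distr (PiM_pmf Q) (Q i) (\<lambda>\<omega>. \<omega> i) = measure_pmf (Q i)"
  by (intro distr_PiM_component measure_pmf.prob_space_axioms) auto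

lemma integral_PiM_pmf_component:
  "(\<integral>\<omega>. f (\<omega> i) \<partial>PiM_pmf Q) = measure_pmf.expectation (Q i) (f :: 'a \<Rightarrow> real)"
  using integral_distr[of "\<lambda>\<omega>. \<omega> i" "PiM_pmf Q" "Q i" f]
  by (simp add: distr_PiM_pmf_component measurable_component_singleton)

lemma integrable_PiM_pmf_component:
  fixes f :: "'a::finite \<Rightarrow> real"
  shows "integrable (PiM_pmf Q) (\<lambda>\<omega>. f (\<omega> i))"
  using integrable_distr_eq[of "\<lambda>\<omega>. \<omega> i" "PiM_pmf Q" "Q i" f]
  by (simp add: distr_PiM_pmf_component measurable_component_singleton integrable_measure_pmf_finite)

lemma indep_vars_PiM_pmf_components:
  "prob_space.indep_vars (PiM_pmf Q) (\<lambda>_. borel) (\<lambda>i \<omega>. f i (\<omega> i) :: real) UNIV"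
proof -
  interpret prob_space "PiM_pmf Q" by (rule prob_space_PiM_pmf)
  have "distr (PiM_pmf Q) (PiM_pmf Q) (\<lambda>\<omega>. \<lambda>i\<in>UNIV. \<omega> i) = PiM UNIV (\<lambda>i. distr (PiM_pmf Q) (Q i) (\<lambda>\<omega>. \<omega> i))"
    by (simp add: distr_PiM_pmf_component restrict_UNIV distr_id[unfolded id_def])
  then have "indep_vars (\<lambda>i. measure_pmf (Q i)) (\<lambda>i \<omega>. \<omega> i) UNIV"
    by (subst indep_vars_iff_distr_eq_PiM) (auto simp: measurable_component_singleton)
  then show ?thesis by (rule indep_vars_compose2) auto
qed

lemma AE_PiM_pmf_in_support:
  "AE \<omega> in PiM_pmf (Q :: 'i::countable \<Rightarrow> 'a pmf). \<forall>i. \<omega> i \<in> set_pmf (Q i)"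
  unfolding AE_all_countable
  by (intro allI AE_PiM_component[where P = "\<lambda>x. x \<in> set_pmf _"])
     (auto simp: measure_pmf.prob_space_axioms AE_measure_pmf)

lemma measure_PiM_pmf_cylinder:
  assumes "finite J"
  shows "measure (PiM_pmf Q) {\<omega> \<in> space (PiM_pmf Q). \<forall>i\<in>J. \<omega> i = x i} = (\<Prod>i\<in>J. pmf (Q i) (x i))"
proof -
  interpret product_prob_space "\<lambda>i. measure_pmf (Q i)" UNIV
    by (simp add: product_prob_space_def product_prob_space_axioms_def product_sigma_finite_def
      measure_pmf.prob_space_axioms prob_space_imp_sigma_finite)
  have "emeasure (PiM_pmf Q) {\<omega> \<in> space (PiM_pmf Q). \<forall>i\<in>J. \<omega> i \<in> {x i}}
      = (\<Prod>i\<in>J. emeasure (Q i) {x i})"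
    using assms by (intro emeasure_PiM_Collect) auto
  then show ?thesis
    by (simp add: emeasure_pmf_single prod_ennreal emeasure_eq_measure prod_nonneg)
qed

lemma strong_law_PiM_pmf:
  fixes Q :: "nat \<Rightarrow> 'a::finite pmf" and g :: "nat \<Rightarrow> 'a \<Rightarrow> real"
  assumes "\<And>k x. k \<ge> 1 \<Longrightarrow> 0 \<le> g k x"
    and "\<And>k. k \<ge> 1 \<Longrightarrow> measure_pmf.expectation (Q k) (\<lambda>x. g k x ^ 2) \<le> C"
  shows "AE \<omega> in PiM_pmf Q.
    (\<lambda>n. (\<Sum>k=1..n. g k (\<omega> k) - measure_pmf.expectation (Q k) (g k)) / real n) \<longlonglongrightarrow> 0"
proof -
  interpret prob_space "PiM_pmf Q" by (rule prob_space_PiM_pmf)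
  have "expectation (\<lambda>\<omega>. g k (\<omega> k) ^ 2) = measure_pmf.expectation (Q k) (\<lambda>x. g k x ^ 2)" for k
    by (rule integral_PiM_pmf_component[where f = "\<lambda>x. g k x ^ 2" and i = k])
  then have "AE \<omega> in PiM_pmf Q.
      (\<lambda>n. (\<Sum>k=1..n. g k (\<omega> k) - expectation (\<lambda>\<omega>. g k (\<omega> k))) / real n) \<longlonglongrightarrow> 0"
    using assms by (intro strong_law_nonneg_bounded_second_moment[where C = C] indep_vars_PiM_pmf_components
        integrable_PiM_pmf_component) auto
  then show ?thesis by (simp add: integral_PiM_pmf_component)
qed

lemma Ilen_eq: "Ilen A n = inverse (\<Prod>k=1..n. A k)"
  by (induction n) (simp_all add: prod.cl_ivl_Suc divide_inverse)

lemma dloc_PiM_pmf: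
  assumes A: "\<And>k. k \<in> {1..n} \<Longrightarrow> 0 < A k"
    and pos: "\<And>k. k \<in> {1..n} \<Longrightarrow> 0 < pmf (Q k) (\<omega> k)"
  shows "dloc (PiM_pmf Q) A \<omega> n = (\<Sum>k=1..n. - ln (pmf (Q k) (\<omega> k))) / (\<Sum>k=1..n. ln (A k))"
proof -
  have "0 < (\<Prod>k=1..n. A k)" using A by (intro prod_pos) auto
  then have "measure lborel (Iint A \<omega> n) = inverse (\<Prod>k=1..n. A k)"
    by (simp add: Iint_def Ilen_eq)
  moreover have "ln (\<Prod>k=1..n. A k) = (\<Sum>k=1..n. ln (A k))"
    using A by (intro ln_prod) (fastforce dest: A)+
  ultimately have "ln (measure lborel (Iint A \<omega> n)) = - (\<Sum>k=1..n. ln (A k))"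
    by (simp add: ln_inverse)
  moreover have "measure (PiM_pmf Q) (cyl (PiM_pmf Q) \<omega> n) = (\<Prod>k=1..n. pmf (Q k) (\<omega> k))"
    unfolding cyl_def by (rule measure_PiM_pmf_cylinder) simp
  moreover have "ln (\<Prod>k=1..n. pmf (Q k) (\<omega> k)) = (\<Sum>k=1..n. ln (pmf (Q k) (\<omega> k)))"
    using pos by (intro ln_prod) (fastforce dest: pos)+
  ultimately show ?thesis
    unfolding dloc_def by (simp add: sum_negf minus_divide_divide)
qed

lemma liminf_limsup_div_cong_sublinear:
  fixes T U B :: "nat \<Rightarrow> real"
  assumes "c > 0" and B: "\<And>n. c * real n \<le> B n"
    and diff: "(\<lambda>n. (T n - U n) / real n) \<longlonglongrightarrow> 0"
  shows "liminf (\<lambda>n. ereal (T n / B n)) = liminf (\<lambda>n. ereal (U n / B n))"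
    and "limsup (\<lambda>n. ereal (T n / B n)) = limsup (\<lambda>n. ereal (U n / B n))"
proof -
  define d where "d n = T n / B n - U n / B n" for n
  have "(\<lambda>n. \<bar>T n - U n\<bar> / real n / c) \<longlonglongrightarrow> 0"
    using tendsto_divide[OF tendsto_rabs_zero[OF diff] tendsto_const[of c]] \<open>c > 0\<close> by simp
  moreover have "norm (d n) \<le> \<bar>T n - U n\<bar> / real n / c" if "n \<ge> 1" for n
  proof -
    have "0 < c * real n" using \<open>c > 0\<close> that by simp
    then have "norm (d n) = \<bar>T n - U n\<bar> / B n"
      using B[of n] by (simp add: d_def diff_divide_distrib[symmetric])
    also have "\<dots> \<le> \<bar>T n - U n\<bar> / (c * real n)"
      using B[of n] \<open>0 < c * real n\<close> by (intro divide_left_mono) auto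
    finally show ?thesis by (simp add: mult.commute)
  qed
  then have "eventually (\<lambda>n. norm (d n) \<le> \<bar>T n - U n\<bar> / real n / c) sequentially"
    unfolding eventually_sequentially by blast
  ultimately have "d \<longlonglongrightarrow> 0" by (rule Lim_null_comparison[rotated])
  then have d: "(\<lambda>n. ereal (d n)) \<longlonglongrightarrow> 0" by (simp add: zero_ereal_def)
  have split: "(\<lambda>n. ereal (T n / B n)) = (\<lambda>n. ereal (d n) + ereal (U n / B n))"
    by (simp add: d_def)
  show "liminf (\<lambda>n. ereal (T n / B n)) = liminf (\<lambda>n. ereal (U n / B n))"
    unfolding split using ereal_liminf_lim_add[OF d] by (simp del: plus_ereal.simps)
  show "limsup (\<lambda>n. ereal (T n / B n)) = limsup (\<lambda>n. ereal (U n / B n))"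
    unfolding split using ereal_limsup_lim_add[OF d] by (simp del: plus_ereal.simps)
qed

lemma mult_ln_square_le_4:
  fixes t :: real
  assumes "0 \<le> t" "t \<le> 1"
  shows "t * (ln t)^2 \<le> 4"
proof (cases "t = 0")
  case False
  define s where "s = sqrt t"
  have s: "0 < s" "s \<le> 1" "t = s * s" using assms False by (simp_all add: s_def)
  have "ln (inverse s) \<le> inverse s - 1" using s by (intro ln_le_minus_one) simp
  then have "- ln s \<le> inverse s" by (simp add: ln_inverse)
  moreover have "0 \<le> - ln s" using s by simp
  ultimately have "(ln s)^2 \<le> (inverse s)^2" using power_mono[of "- ln s" "inverse s" 2] by simp
  have "t * (ln t)^2 = 4 * (s^2 * (ln s)^2)"
    using s by (simp add: ln_mult power2_eq_square algebra_simps)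
  also have "\<dots> \<le> 4 * (s^2 * (inverse s)^2)"
    using \<open>(ln s)^2 \<le> (inverse s)^2\<close> by (intro mult_left_mono) auto
  also have "\<dots> = 4" using s by (simp add: power2_eq_square field_simps)
  finally show ?thesis .
qed simp

lemma ln_square_le_of_le:
  fixes a x :: real
  assumes "0 < a" "a \<le> x" "x \<le> 1"
  shows "(ln x)^2 \<le> (ln a)^2"
proof -
  have "0 \<le> - ln x" "- ln x \<le> - ln a" using assms by simp_all
  then have "(- ln x)^2 \<le> (- ln a)^2" by (intro power_mono)
  then show ?thesis by simp
qed

lemma bernoulli_ln_second_moment_le:
  fixes a b q t :: real
  assumes "0 < a" "a \<le> q" "q \<le> b" "b < 1" "0 \<le> t" "t \<le> 1"
  shows "t * (ln q)^2 + (1 - t) * (ln (1 - q))^2 \<le> (ln a)^2 + (ln (1 - b))^2"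
proof (rule convex_bound_le)
  show "(ln q)^2 \<le> (ln a)^2 + (ln (1 - b))^2"
    using ln_square_le_of_le[of a q] assms by (simp add: add_increasing2)
  show "(ln (1 - q))^2 \<le> (ln a)^2 + (ln (1 - b))^2"
    using ln_square_le_of_le[of "1 - b" "1 - q"] assms by (simp add: add_increasing)
qed (use assms in auto)

lemma entropy_ln_second_moment_le:
  fixes t :: real
  assumes "0 \<le> t" "t \<le> 1"
  shows "t * (ln t)^2 + (1 - t) * (ln (1 - t))^2 \<le> 8"
  using mult_ln_square_le_4[of t] mult_ln_square_le_4[of "1 - t"] assms by simp

lemma strong_law_coding_meas_neg_ln:
  fixes p' q :: "nat \<Rightarrow> real"
  assumes p': "\<forall>n\<ge>1. 0 \<le> p' n \<and> p' n \<le> 1"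
    and q: "\<forall>n\<ge>1. 0 \<le> q n \<and> q n \<le> 1"
    and second_moment: "\<forall>k\<ge>1. p' k * (ln (q k))^2 + (1 - p' k) * (ln (1 - q k))^2 \<le> C"
  defines "g \<equiv> \<lambda>k x. - ln (pmf (bernoulli_pmf (1 - q k)) x)"
    and "zs \<equiv> \<lambda>k. - p' k * ln (q k) - (1 - p' k) * ln (1 - q k)"
  shows "AE \<omega> in coding_meas p'. (\<lambda>n. (\<Sum>k=1..n. g k (\<omega> k) - zs k) / real n) \<longlonglongrightarrow> 0"
proof -
  define Q' where "Q' k = bernoulli_pmf (1 - p' k)" for k
  have meas_p': "coding_meas p' = PiM_pmf Q'" by (simp add: coding_meas_def Q'_def)
  have pmf_q: "pmf (bernoulli_pmf (1 - q k)) x = (if x then 1 - q k else q k)" if "k \<ge> 1" for k x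
    using q that by (cases x) simp_all
  have "AE \<omega> in PiM_pmf Q'.
      (\<lambda>n. (\<Sum>k=1..n. g k (\<omega> k) - measure_pmf.expectation (Q' k) (g k)) / real n) \<longlonglongrightarrow> 0"
  proof (rule strong_law_PiM_pmf[where C = C])
    have "ln y \<le> 0" if "0 \<le> y" "y \<le> 1" for y :: real
      using that by (cases "y = 0") auto
    then show "0 \<le> g k x" if "k \<ge> 1" for k x
      using q that by (simp add: g_def pmf_q)
    show "measure_pmf.expectation (Q' k) (\<lambda>x. g k x ^ 2) \<le> C" if "k \<ge> 1" for k
      using p' second_moment that by (simp add: Q'_def g_def pmf_q algebra_simps)
  qed
  moreover have "measure_pmf.expectation (Q' k) (g k) = zs k" if "k \<ge> 1" for k
    using p' that by (simp add: Q'_def g_def pmf_q zs_def algebra_simps)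
  then have "(\<Sum>k=1..n. g k (\<omega> k) - measure_pmf.expectation (Q' k) (g k))
      = (\<Sum>k=1..n. g k (\<omega> k) - zs k)" for n \<omega>
    by (intro sum.cong) auto
  ultimately show ?thesis unfolding meas_p' by simp
qed

(* pos excludes cylinders of measure 0, on which dloc takes the junk value ln 0 / _ = 0. *)
lemma AE_dloc_coding_meas:
  fixes A p' q :: "nat \<Rightarrow> real"
  assumes A: "\<forall>n\<ge>1. A n \<ge> 2"
    and p': "\<forall>n\<ge>1. 0 \<le> p' n \<and> p' n \<le> 1"
    and q: "\<forall>n\<ge>1. 0 \<le> q n \<and> q n \<le> 1"
    and second_moment: "\<forall>k\<ge>1. p' k * (ln (q k))^2 + (1 - p' k) * (ln (1 - q k))^2 \<le> C"
    and pos: "AE \<omega> in coding_meas p'. \<forall>k\<ge>1. 0 < (if \<omega> k then 1 - q k else q k)"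
  defines "zs \<equiv> \<lambda>k. - p' k * ln (q k) - (1 - p' k) * ln (1 - q k)"
  shows "AE \<omega> in coding_meas p'.
            liminf (\<lambda>n. ereal (dloc (coding_meas q) A \<omega> n))
              = liminf (\<lambda>n. ereal ((\<Sum>k=1..n. zs k) / (\<Sum>k=1..n. ln (A k))))
          \<and> limsup (\<lambda>n. ereal (dloc (coding_meas q) A \<omega> n))
              = limsup (\<lambda>n. ereal ((\<Sum>k=1..n. zs k) / (\<Sum>k=1..n. ln (A k))))"
  using strong_law_coding_meas_neg_ln[OF p' q second_moment] pos
proof eventually_elim
  case (elim \<omega>)
  define g where "g k = - ln (pmf (bernoulli_pmf (1 - q k)) (\<omega> k))" for k
  define B where "B n = (\<Sum>k=1..n. ln (A k))" for n
  have "(\<Sum>k=1..n. ln (2::real)) \<le> B n" for n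
    unfolding B_def using A by (intro sum_mono) auto
  then have B_ge: "ln 2 * real n \<le> B n" for n by (simp add: mult.commute)
  have diff: "(\<lambda>n. ((\<Sum>k=1..n. g k) - (\<Sum>k=1..n. zs k)) / real n) \<longlonglongrightarrow> 0"
    using elim(1) by (simp add: g_def zs_def sum_subtractf)
  have pmf_pos: "0 < pmf (bernoulli_pmf (1 - q k)) (\<omega> k)" if "k \<in> {1..n}" for k n
    using q elim(2) that by (cases "\<omega> k") auto
  have A_pos: "0 < A k" if "k \<in> {1..n}" for k n
    using A that by force
  have dloc: "dloc (coding_meas q) A \<omega> n = (\<Sum>k=1..n. g k) / B n" for n
    unfolding coding_meas_def B_def g_def by (rule dloc_PiM_pmf[OF A_pos pmf_pos])
  show ?case
    using liminf_limsup_div_cong_sublinear[OF _ B_ge diff] unfolding dloc by (simp add: B_def)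
qed

lemma AE_coding_meas_digit_prob_pos:
  assumes "\<forall>n\<ge>1. 0 \<le> q n \<and> q n \<le> 1"
  shows "AE \<omega> in coding_meas q. \<forall>k\<ge>1. 0 < (if \<omega> k then 1 - q k else q k)"
  using AE_PiM_pmf_in_support[of "\<lambda>k. bernoulli_pmf (1 - q k)"] unfolding coding_meas_def
proof eventually_elim
  case (elim \<omega>)
  show ?case
  proof (intro allI impI)
    fix k :: nat assume "k \<ge> 1"
    have "pmf (bernoulli_pmf (1 - q k)) (\<omega> k) \<noteq> 0" using elim by (simp add: set_pmf_iff)
    then show "0 < (if \<omega> k then 1 - q k else q k)"
      using assms \<open>k \<ge> 1\<close> by (cases "\<omega> k") auto
  qed
qed

theorem lemma3p2:
  fixes A p p' :: "nat \<Rightarrow> real" and a b :: real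
  assumes "\<forall>n\<ge>1. A n \<ge> 2"
    and "0 < a" and "a \<le> b" and "b < 1"
    and "\<forall>n\<ge>1. a \<le> p n \<and> p n \<le> b"
    and "\<forall>n\<ge>1. 0 \<le> p' n \<and> p' n \<le> 1"
  defines "\<nu> \<equiv> coding_meas p" and "\<nu>' \<equiv> coding_meas p'"
    and "bs \<equiv> (\<lambda>k. ln (A k))"
    and "xs \<equiv> (\<lambda>k. - p' k * ln (p k) - (1 - p' k) * ln (1 - p k))"
    and "ys \<equiv> (\<lambda>k. - p' k * ln (p' k) - (1 - p' k) * ln (1 - p' k))"
  shows "(AE \<omega> in \<nu>'.
            liminf (\<lambda>n. ereal (dloc \<nu> A \<omega> n))
              = liminf (\<lambda>n. ereal ((\<Sum>k=1..n. xs k) / (\<Sum>k=1..n. bs k)))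
          \<and> limsup (\<lambda>n. ereal (dloc \<nu> A \<omega> n))
              = limsup (\<lambda>n. ereal ((\<Sum>k=1..n. xs k) / (\<Sum>k=1..n. bs k))))
       \<and> (AE \<omega> in \<nu>'.
            liminf (\<lambda>n. ereal (dloc \<nu>' A \<omega> n))
              = liminf (\<lambda>n. ereal ((\<Sum>k=1..n. ys k) / (\<Sum>k=1..n. bs k)))
          \<and> limsup (\<lambda>n. ereal (dloc \<nu>' A \<omega> n))
              = limsup (\<lambda>n. ereal ((\<Sum>k=1..n. ys k) / (\<Sum>k=1..n. bs k))))"
proof -
  have p: "\<forall>n\<ge>1. 0 \<le> p n \<and> p n \<le> 1" and p_pos: "\<forall>k\<ge>1. 0 < p k \<and> 0 < 1 - p k"
    using assms(2,4,5) by force+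
  show ?thesis
    unfolding \<nu>_def \<nu>'_def bs_def xs_def ys_def
    apply (rule conjI)
    subgoal
      using assms p p_pos
      by (intro AE_dloc_coding_meas[where C = "(ln a)^2 + (ln (1 - b))^2"] AE_I2)
         (auto intro!: bernoulli_ln_second_moment_le)
    subgoal
      using assms(1,6)
      by (intro AE_dloc_coding_meas[where C = 8] AE_coding_meas_digit_prob_pos)
         (auto intro!: entropy_ln_second_moment_le)
    done
qed

end
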